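(* $$b_{\sup}\le \frac12-\frac{2}{(2+(1+2\sqrt2)\pi)^2}=0.489\ldots.$$
   Context: $[n]=\{1,\dots,n\}$; for $A\subset\mathbb Z$, $A+A=\{a+b:a,b\in A\}$. Define $$b_{\sup}=\limsup_{\epsilon\to0,\ k\to\infty}\frac{\max\{n : \exists A\subset\mathbb Z,\ |A|=k,\ |(A+A)\cap[n]|\ge(1-\epsilon)n\}}{k^2}.$$ *)

theory Defs
  imports "HOL-Analysis.Analysis"
begin

definition sumset :: "int set \<Rightarrow> int set" where
  "sumset A = {a + b | a b. a \<in> A \<and> b \<in> A}"

definition maxN :: "nat \<Rightarrow> real \<Rightarrow> nat" where
  "maxN k eps = Max {n::nat. \<exists>A::int set. finite A \<and> card A = k \<and>
      real (card (sumset A \<inter> {1..int n})) \<ge> (1 - eps) * real n}"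

definition b_sup :: ereal where
  "b_sup = Limsup (at_right (0::real) \<times>\<^sub>F sequentially)
              (\<lambda>(eps, k). ereal (real (maxN k eps) / (real k) ^ 2))"

end

theory Submission
  imports Defs
begin

(*
  Write f(t) = sum over a in A of e^(iat), D(t) = sum over x in [n] of e^(ixt), and S = (A + A) \<inter> [n].
  Since f(t)^2 + f(2t) = 2 * sum over a <= b of e^(i(a+b)t), and every element of S is such an
  a + b, one gets |f(t)^2 - 2 D(t)| <= Q := 2n + k^2 + 2k - 4|S|, which is small when S nearly
  covers [n] and n is close to k^2/2.  At t = 2pi/n the kernel D vanishes, so |f(2pi/n)|^2 <= Q;
  at t = pi/n it is large, |D(pi/n)| >= 2n/pi, so |f(pi/n)|^2 >= 4n/pi - Q.  Cauchy-Schwarz applied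
  to the cosines cos(at - arg f(t)) gives 2|f(t)|^2 <= k(k + |f(2t)|), and the three estimates are
  incompatible once n >= 0.4895 k^2 (for k >= 1000 and eps <= 1/4000).
*)

definition exp_sum :: "int set \<Rightarrow> real \<Rightarrow> complex" where
  "exp_sum A t = (\<Sum>a\<in>A. cis (of_int a * t))"

definition upper_pairs :: "'a::linorder set \<Rightarrow> ('a \<times> 'a) set" where
  "upper_pairs A = {(a, b) \<in> A \<times> A. a \<le> b}"

lemma norm_cis_minus_one_le: "cmod (cis t - 1) \<le> \<bar>t\<bar>"
proof -
  have "(cmod (cis t - 1))\<^sup>2 = (cos t - 1)\<^sup>2 + (sin t)\<^sup>2"
    by (simp add: cmod_def)
  also have "\<dots> = (2 * sin (t/2))\<^sup>2"
    using sin_cos_squared_add[of t] cos_double_sin[of "t/2"]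
    by (simp add: power2_eq_square algebra_simps)
  also have "\<dots> \<le> t\<^sup>2"
  proof -
    have "\<bar>2 * sin (t/2)\<bar> \<le> \<bar>t\<bar>"
      using abs_sin_x_le_abs_x[of "t/2"] by simp
    then show ?thesis
      by (simp only: abs_le_square_iff)
  qed
  finally show ?thesis
    by (simp add: abs_le_square_iff[symmetric])
qed

lemma exp_sum_interval_geometric:
  "exp_sum {1..int n} t * (cis t - 1) = cis t * (cis t ^ n - 1)"
proof (induction n)
  case 0
  show ?case by (simp add: exp_sum_def)
next
  case (Suc n)
  have "{1..int (Suc n)} = insert (int n + 1) {1..int n}" by auto
  moreover have "cis (of_int (int n + 1) * t) = cis t ^ Suc n"
    unfolding Complex.DeMoivre by (simp add: algebra_simps)
  ultimately have "exp_sum {1..int (Suc n)} t = cis t ^ Suc n + exp_sum {1..int n} t"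
    by (simp add: exp_sum_def)
  then show ?case
    using Suc.IH by (simp add: algebra_simps)
qed

lemma exp_sum_interval_full_period:
  assumes "n \<ge> 2"
  shows "exp_sum {1..int n} (2 * pi / n) = 0"
proof -
  have "cos (2 * (pi / n)) < 1"
    using assms pi_less_4 by (intro cos_double_less_one) (auto simp: field_simps)
  then have "cis (2 * pi / n) - 1 \<noteq> 0"
    by (auto simp: complex_eq_iff)
  moreover have "cis (2 * pi / n) ^ n = 1"
    using assms unfolding Complex.DeMoivre by simp
  ultimately show ?thesis
    using exp_sum_interval_geometric[of n "2 * pi / n"] by simp
qed

lemma norm_exp_sum_interval_half_period:
  assumes "n \<ge> 1"
  shows "2 * n / pi \<le> cmod (exp_sum {1..int n} (pi / n))"
proof -
  let ?z = "cis (pi / n)"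
  have "?z ^ n = -1"
    using assms unfolding Complex.DeMoivre by simp
  then have "cmod (exp_sum {1..int n} (pi / n)) * cmod (?z - 1) = 2"
    using arg_cong[OF exp_sum_interval_geometric[of n "pi / n"], of cmod]
    by (simp add: norm_mult)
  moreover have "cmod (?z - 1) \<le> pi / n"
    using norm_cis_minus_one_le[of "pi / n"] by simp
  ultimately have "2 \<le> cmod (exp_sum {1..int n} (pi / n)) * (pi / n)"
    by (metis mult_left_mono norm_ge_zero)
  then show ?thesis
    using assms by (simp add: field_simps)
qed

lemma norm_sum_cis_le_card: "cmod (\<Sum>x\<in>B. cis (g x)) \<le> card B"
  using norm_sum[of "\<lambda>x. cis (g x)" B] by simp

lemma norm_sum_cis_diff_subset:
  assumes "finite C" and "B \<subseteq> C"
  shows "cmod ((\<Sum>x\<in>C. cis (g x)) - (\<Sum>x\<in>B. cis (g x))) \<le> real (card C) - real (card B)"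
proof -
  have "(\<Sum>x\<in>C. cis (g x)) - (\<Sum>x\<in>B. cis (g x)) = (\<Sum>x\<in>C - B. cis (g x))"
    using sum.subset_diff[OF assms(2,1), of "\<lambda>x. cis (g x)"] by simp
  moreover have "card (C - B) = card C - card B" and "card B \<le> card C"
    using assms by (auto intro: card_Diff_subset card_mono finite_subset)
  ultimately show ?thesis
    using norm_sum_cis_le_card[of g "C - B"] by simp
qed

lemma norm_sum_cis_image_diff:
  assumes "finite P" and "S \<subseteq> f ` P"
  shows "cmod ((\<Sum>p\<in>P. cis (g (f p))) - (\<Sum>x\<in>S. cis (g x))) \<le> real (card P) - real (card S)"
proof -
  let ?r = "inv_into P f"
  have inj: "inj_on ?r S"
    using assms(2) by (rule inj_on_inv_into)
  have sub: "?r ` S \<subseteq> P"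
    using assms(2) by (auto intro: inv_into_into)
  have "(\<Sum>x\<in>S. cis (g x)) = (\<Sum>p\<in>?r ` S. cis (g (f p)))"
    using assms(2) by (simp add: sum.reindex[OF inj] f_inv_into_f subset_iff)
  moreover have "card (?r ` S) = card S"
    using inj by (rule card_image)
  ultimately show ?thesis
    using norm_sum_cis_diff_subset[OF assms(1) sub, of "g \<circ> f"] by simp
qed

lemma finite_upper_pairs: "finite A \<Longrightarrow> finite (upper_pairs A)"
  by (auto simp: upper_pairs_def intro: finite_subset[of _ "A \<times> A"])

lemma sum_upper_pairs_symmetric:
  fixes h :: "'a::linorder \<times> 'a \<Rightarrow> 'b::semiring_1"
  assumes "finite A" and "\<And>a b. h (a, b) = h (b, a)"
  shows "(\<Sum>p\<in>A \<times> A. h p) + (\<Sum>a\<in>A. h (a, a)) = 2 * (\<Sum>p\<in>upper_pairs A. h p)"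
proof -
  let ?U = "upper_pairs A"
  have fin: "finite ?U" "finite (prod.swap ` ?U)"
    using finite_upper_pairs[OF assms(1)] by simp_all
  have "?U \<union> prod.swap ` ?U = A \<times> A"
    by (auto simp: upper_pairs_def image_iff)
  moreover have "?U \<inter> prod.swap ` ?U = (\<lambda>a. (a, a)) ` A"
    by (auto simp: upper_pairs_def)
  moreover have "(\<Sum>p\<in>prod.swap ` ?U. h p) = (\<Sum>p\<in>?U. h p)"
  proof -
    have "h (prod.swap p) = h p" for p
      using assms(2)[of "fst p" "snd p"] by (cases p) simp
    then show ?thesis
      by (simp add: sum.reindex)
  qed
  ultimately show ?thesis
    using sum.union_inter[OF fin, of h] by (simp add: sum.reindex inj_on_def mult_2)
qed

lemma card_upper_pairs:
  assumes "finite A"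
  shows "2 * card (upper_pairs A) = card A ^ 2 + card A"
  using sum_upper_pairs_symmetric[OF assms, of "\<lambda>_. 1 :: nat"]
  by (simp add: card_cartesian_product power2_eq_square)

lemma exp_sum_square_add_double:
  assumes "finite A"
  shows "exp_sum A t ^ 2 + exp_sum A (2 * t) = 2 * (\<Sum>(a, b)\<in>upper_pairs A. cis (of_int (a + b) * t))"
proof -
  have "exp_sum A t ^ 2 = (\<Sum>(a, b)\<in>A \<times> A. cis (of_int (a + b) * t))"
    unfolding exp_sum_def power2_eq_square sum_product sum.cartesian_product
    by (simp add: cis_mult distrib_right)
  moreover have "exp_sum A (2 * t) = (\<Sum>a\<in>A. cis (of_int (a + a) * t))"
    unfolding exp_sum_def by (simp add: algebra_simps)
  ultimately show ?thesis
    using sum_upper_pairs_symmetric[OF assms, of "\<lambda>(a, b). cis (of_int (a + b) * t)"]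
    by (simp add: add.commute)
qed

lemma norm_exp_sum_square_sub_interval:
  assumes "finite A"
  shows "cmod (exp_sum A t ^ 2 - 2 * exp_sum {1..int n} t)
    \<le> 2 * real n + real (card A) ^ 2 + 2 * real (card A) - 4 * real (card (sumset A \<inter> {1..int n}))"
proof -
  define S where "S = sumset A \<inter> {1..int n}"
  define P where "P = (\<Sum>(a, b)\<in>upper_pairs A. cis (of_int (a + b) * t))"
  define T where "T = exp_sum S t"
  have "exp_sum A t ^ 2 - 2 * exp_sum {1..int n} t
      = 2 * (P - T) - 2 * (exp_sum {1..int n} t - T) - exp_sum A (2 * t)"
    using exp_sum_square_add_double[OF assms, of t] unfolding P_def by (simp add: algebra_simps)
  then have "cmod (exp_sum A t ^ 2 - 2 * exp_sum {1..int n} t)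
      \<le> cmod (2 * (P - T)) + cmod (2 * (exp_sum {1..int n} t - T)) + cmod (exp_sum A (2 * t))"
    by (smt (verit) norm_triangle_ineq4)
  then have "cmod (exp_sum A t ^ 2 - 2 * exp_sum {1..int n} t)
      \<le> 2 * cmod (P - T) + 2 * cmod (exp_sum {1..int n} t - T) + cmod (exp_sum A (2 * t))"
    by (simp only: norm_mult norm_numeral)
  moreover have "cmod (P - T) \<le> real (card (upper_pairs A)) - real (card S)"
  proof -
    have "finite (upper_pairs A)"
      using assms by (rule finite_upper_pairs)
    moreover have "S \<subseteq> (\<lambda>(a, b). a + b) ` upper_pairs A"
      by (auto simp: S_def sumset_def upper_pairs_def image_iff) (metis add.commute le_cases)
    ultimately show ?thesis
      using norm_sum_cis_image_diff[of _ S "\<lambda>(a, b). a + b" "\<lambda>x. of_int x * t"]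
      by (simp add: P_def T_def exp_sum_def case_prod_unfold)
  qed
  moreover have "cmod (exp_sum {1..int n} t - T) \<le> real n - real (card S)"
    using norm_sum_cis_diff_subset[of "{1..int n}" S] by (simp add: S_def T_def exp_sum_def)
  moreover have "cmod (exp_sum A (2 * t)) \<le> real (card A)"
    unfolding exp_sum_def by (rule norm_sum_cis_le_card)
  moreover have "2 * real (card (upper_pairs A)) = real (card A) ^ 2 + real (card A)"
    using arg_cong[OF card_upper_pairs[OF assms], of real] by simp
  ultimately show ?thesis
    unfolding S_def by linarith
qed

lemma norm_exp_sum_square_le:
  "2 * (cmod (exp_sum A t))\<^sup>2 \<le> real (card A) * (real (card A) + cmod (exp_sum A (2 * t)))"
proof -
  define r where "r = cmod (exp_sum A t)"
  define \<theta> where "\<theta> = Arg (exp_sum A t)"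
  define c where "c a = cos (of_int a * t - \<theta>)" for a :: int
  have polar: "exp_sum A t = of_real r * cis \<theta>"
    using rcis_cmod_Arg[of "exp_sum A t"] by (simp add: r_def \<theta>_def rcis_def)
  have rotate: "cis (- \<phi>) * exp_sum A s = (\<Sum>a\<in>A. cis (of_int a * s - \<phi>))" for s \<phi>
    by (simp add: exp_sum_def sum_distrib_left cis_mult)
  have "(\<Sum>a\<in>A. c a) = Re (cis (- \<theta>) * exp_sum A t)"
    by (simp add: rotate c_def Re_sum)
  also have "\<dots> = r"
    by (simp add: polar mult.left_commute[of "cis (- \<theta>)"] cis_mult)
  finally have sum_c: "(\<Sum>a\<in>A. c a) = r" .
  have "cos (of_int a * (2 * t) - 2 * \<theta>) = 2 * (c a)\<^sup>2 - 1" for a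
    using cos_double_cos[of "of_int a * t - \<theta>"] by (simp add: c_def algebra_simps)
  then have "2 * (\<Sum>a\<in>A. (c a)\<^sup>2) - card A = (\<Sum>a\<in>A. cos (of_int a * (2 * t) - 2 * \<theta>))"
    by (simp add: sum_subtractf sum_distrib_left)
  also have "\<dots> = Re (cis (- (2 * \<theta>)) * exp_sum A (2 * t))"
    by (simp add: rotate Re_sum)
  also have "\<dots> \<le> cmod (exp_sum A (2 * t))"
    using complex_Re_le_cmod by (metis mult_1 norm_cis norm_mult)
  finally have sum_c2: "2 * (\<Sum>a\<in>A. (c a)\<^sup>2) \<le> card A + cmod (exp_sum A (2 * t))"
    by simp
  have "2 * r\<^sup>2 \<le> card A * (2 * (\<Sum>a\<in>A. (c a)\<^sup>2))"
    using sum_squared_le_sum_of_squares[of c A] sum_c by (simp add: algebra_simps)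
  also have "\<dots> \<le> card A * (card A + cmod (exp_sum A (2 * t)))"
    using sum_c2 by (rule mult_left_mono) simp
  finally show ?thesis
    unfolding r_def .
qed

lemma sumset_interval_fourier_inequality:
  assumes "finite A" and "n \<ge> 2"
  defines "Q \<equiv> 2 * real n + real (card A) ^ 2 + 2 * real (card A)
                - 4 * real (card (sumset A \<inter> {1..int n}))"
  shows "8 * real n / pi - 2 * Q \<le> real (card A) * (real (card A) + sqrt Q)"
proof -
  let ?f = "exp_sum A" and ?D = "exp_sum {1..int n}" and ?t = "pi / n"
  have "(cmod (?f (2 * ?t)))\<^sup>2 \<le> Q"
    using norm_exp_sum_square_sub_interval[OF assms(1), of "2 * ?t" n]
      exp_sum_interval_full_period[OF assms(2)]
    by (simp add: Q_def norm_power)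
  then have "cmod (?f (2 * ?t)) \<le> sqrt Q"
    by (rule real_le_rsqrt)
  then have "2 * (cmod (?f ?t))\<^sup>2 \<le> real (card A) * (real (card A) + sqrt Q)"
    using norm_exp_sum_square_le[of A ?t] by (smt (verit) mult_left_mono of_nat_0_le_iff)
  moreover have "2 * (2 * n / pi) \<le> cmod (2 * ?D ?t)"
    using norm_exp_sum_interval_half_period[of n] assms(2) by simp
  moreover have "cmod (2 * ?D ?t) \<le> cmod (?f ?t ^ 2) + cmod (?f ?t ^ 2 - 2 * ?D ?t)"
    by (metis norm_minus_commute norm_triangle_sub)
  moreover have "cmod (?f ?t ^ 2 - 2 * ?D ?t) \<le> Q"
    using norm_exp_sum_square_sub_interval[OF assms(1), of ?t n] by (simp add: Q_def)
  ultimately show ?thesis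
    by (simp add: norm_power)
qed

lemma sumset_interval_cover_bound:
  assumes "finite A" and "card A = k" and "k \<ge> 1000" and "eps \<le> 1/4000"
    and cover: "(1 - eps) * real n \<le> real (card (sumset A \<inter> {1..int n}))"
  shows "real n < 4895/10000 * (real k)\<^sup>2"
proof (rule ccontr)
  assume "\<not> ?thesis"
  then have n_large: "4895/10000 * (real k)\<^sup>2 \<le> real n"
    by simp
  define Q where "Q = 2 * real n + real k ^ 2 + 2 * real k
                - 4 * real (card (sumset A \<inter> {1..int n}))"
  have k_large: "1000 \<le> real k"
    using assms(3) by simp
  then have k_sq: "1000 * real k \<le> (real k)\<^sup>2"
    by (simp add: power2_eq_square)
  have "eps * real n \<le> real n / 4000"
    using mult_right_mono[OF assms(4), of "real n"] by simp
  then have Q_upper: "Q \<le> (real k)\<^sup>2 + 2 * real k - 2 * real n + real n / 1000"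
    using cover unfolding Q_def by (simp add: algebra_simps)
  have "real n \<ge> 2"
    using n_large k_sq k_large by linarith
  then have "n \<ge> 2"
    by simp
  then have "8 * real n / pi - 2 * Q \<le> real k * (real k + sqrt Q)"
    using sumset_interval_fourier_inequality[OF assms(1)] assms(2) unfolding Q_def by simp
  moreover have "sqrt Q \<le> 16/100 * real k"
    using Q_upper n_large k_sq by (intro real_le_lsqrt) (simp_all add: power2_eq_square)
  then have "real k * (real k + sqrt Q) \<le> 116/100 * (real k)\<^sup>2"
    using mult_left_mono[of "sqrt Q" "16/100 * real k" "real k"] by (simp add: power2_eq_square algebra_simps)
  moreover have "5/2 * real n \<le> 8 * real n / pi"
    using pi_approx mult_right_mono[of pi "16/5" "real n"] by (simp add: field_simps)
  ultimately show False
    using Q_upper n_large k_sq k_large by linarith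
qed

lemma maxN_le:
  assumes "k \<ge> 1000" and "eps \<le> 1/4000"
  shows "real (maxN k eps) \<le> 4895/10000 * (real k)\<^sup>2"
proof -
  define M where "M = {n::nat. \<exists>A::int set. finite A \<and> card A = k \<and>
      (1 - eps) * real n \<le> real (card (sumset A \<inter> {1..int n}))}"
  have bound: "real n < 4895/10000 * (real k)\<^sup>2" if "n \<in> M" for n
    using that sumset_interval_cover_bound[OF _ _ assms] unfolding M_def by blast
  have "M \<subseteq> {..k\<^sup>2}"
  proof
    fix n
    assume "n \<in> M"
    then have "real n \<le> (real k)\<^sup>2"
      using bound[of n] zero_le_power2[of "real k"] by linarith
    then show "n \<in> {..k\<^sup>2}"
      by (metis atMost_iff of_nat_le_iff of_nat_power)
  qed
  then have "finite M"
    by (rule finite_subset) simp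
  moreover have "0 \<in> M"
    unfolding M_def by (intro CollectI exI[of _ "{1..int k}"]) simp
  ultimately have "Max M \<in> M"
    using Max_in by blast
  then show ?thesis
    using bound unfolding maxN_def M_def by fastforce
qed

lemma theorem6_constant_ge: "4895/10000 \<le> 1/2 - 2 / (2 + (1 + 2 * sqrt 2) * pi) ^ 2"
proof -
  have "141/100 \<le> sqrt 2"
    by (rule real_le_rsqrt) (simp add: power2_eq_square)
  then have "1399/100 \<le> 2 + (1 + 2 * sqrt 2) * pi"
    using pi_approx mult_mono[of "382/100" "1 + 2 * sqrt 2" "314/100" pi] by simp
  then have "(1399/100)\<^sup>2 \<le> (2 + (1 + 2 * sqrt 2) * pi)\<^sup>2"
    by (rule power_mono) simp
  then have "195 \<le> (2 + (1 + 2 * sqrt 2) * pi)\<^sup>2"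
    by (rule order_trans[rotated]) (simp add: power_divide)
  then have "2 / (2 + (1 + 2 * sqrt 2) * pi) ^ 2 \<le> 2 / 195"
    by (intro divide_left_mono) auto
  then show ?thesis
    by simp
qed

theorem theorem6:
  shows "b_sup \<le> ereal (1/2 - 2 / (2 + (1 + 2 * sqrt 2) * pi) ^ 2)"
proof -
  have "\<forall>\<^sub>F (eps, k) in at_right (0::real) \<times>\<^sub>F sequentially. eps < 1/4000 \<and> 1000 \<le> k"
    using eventually_prodI[OF eventually_at_right_real[of 0 "1/4000"] eventually_ge_at_top[of 1000]]
    by (auto simp: case_prod_unfold elim: eventually_mono)
  then have "\<forall>\<^sub>F (eps, k) in at_right 0 \<times>\<^sub>F sequentially.
      ereal (real (maxN k eps) / (real k)\<^sup>2) \<le> ereal (4895/10000)"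
  proof (rule eventually_mono, safe)
    fix eps :: real and k :: nat
    assume "eps < 1/4000" and "1000 \<le> k"
    then show "ereal (real (maxN k eps) / (real k)\<^sup>2) \<le> ereal (4895/10000)"
      using maxN_le[of k eps] by (simp add: divide_le_eq)
  qed
  then have "b_sup \<le> ereal (4895/10000)"
    unfolding b_sup_def by (auto simp: case_prod_unfold intro!: Limsup_bounded)
  also have "\<dots> \<le> ereal (1/2 - 2 / (2 + (1 + 2 * sqrt 2) * pi) ^ 2)"
    using theorem6_constant_ge by simp
  finally show ?thesis .
qed

end
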